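(* Let $r\ge1$, let $\delta$ be an integer, and for $x,y\in\mathbb R^r$ put $x\cap y=(\min(x_i,y_i))_{1\le i\le r}$. Let $\lambda,\mu\in\mathbb R^r$. (i) If $\lambda$ and $\mu$ are strictly decreasing and are conjugate under the action of $W(C_r)$, then $\lambda$ and $\lambda\cap\mu$ are conjugate under the action of $W(C_r)$. (ii) If $\lambda$ and $\mu$ are decreasing and are conjugate under the star action of $W(C_r)$, then $\lambda$ and $\lambda\cap\mu$ are conjugate under the star action of $W(C_r)$. (iii) Assertions (i) and (ii) also hold with $W(C_r)$ replaced by $W(D_r)$.
   Context: $W(C_r)$ is the group of signed permutations of the coordinates of $\mathbb R^r$ and $W(D_r)\subseteq W(C_r)$ the subgroup of signed permutations involving an even number of sign changes. $\hat\rho=(-\tfrac\delta2,-\tfrac\delta2-1,\dots,-\tfrac\delta2-(r-1))$ and the star action is $w\star x=w(x+\hat\rho)-\hat\rho$. "Decreasing" means $x_1\ge x_2\ge\cdots\ge x_r$; "strictly decreasing" means $x_1>\cdots>x_r$. *)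

theory Defs
  imports Complex_Main "HOL-Combinatorics.Permutations"
begin

text \<open>Vectors in R^r are functions nat => real; only coordinates 0..r-1 matter
  (coordinate i here is coordinate i+1 of the paper).
  A signed permutation is a pair (sigma, s) where sigma permutes {..<r} and
  s i says whether coordinate i is negated.\<close>

definition sp_act :: "nat \<Rightarrow> (nat \<Rightarrow> nat) \<Rightarrow> (nat \<Rightarrow> bool) \<Rightarrow> (nat \<Rightarrow> real) \<Rightarrow> (nat \<Rightarrow> real)" where
  "sp_act r \<sigma> s x = (\<lambda>i. if i < r then (if s i then - x (\<sigma> i) else x (\<sigma> i)) else x i)"

definition W_C :: "nat \<Rightarrow> ((nat \<Rightarrow> nat) \<times> (nat \<Rightarrow> bool)) set" where
  "W_C r = {(\<sigma>, s). \<sigma> permutes {..<r} \<and> (\<forall>i. s i \<longrightarrow> i < r)}"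

definition W_D :: "nat \<Rightarrow> ((nat \<Rightarrow> nat) \<times> (nat \<Rightarrow> bool)) set" where
  "W_D r = {(\<sigma>, s). (\<sigma>, s) \<in> W_C r \<and> even (card {i. i < r \<and> s i})}"

definition rho_hat :: "int \<Rightarrow> nat \<Rightarrow> real" where
  "rho_hat \<delta> i = - (of_int \<delta> / 2) - real i"

definition star_act :: "int \<Rightarrow> nat \<Rightarrow> (nat \<Rightarrow> nat) \<Rightarrow> (nat \<Rightarrow> bool) \<Rightarrow> (nat \<Rightarrow> real) \<Rightarrow> (nat \<Rightarrow> real)" where
  "star_act \<delta> r \<sigma> s x = (\<lambda>i. sp_act r \<sigma> s (\<lambda>j. x j + rho_hat \<delta> j) i - rho_hat \<delta> i)"

definition conj_lin :: "((nat \<Rightarrow> nat) \<times> (nat \<Rightarrow> bool)) set \<Rightarrow> nat \<Rightarrow> (nat \<Rightarrow> real) \<Rightarrow> (nat \<Rightarrow> real) \<Rightarrow> bool" where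
  "conj_lin W r x y \<longleftrightarrow> (\<exists>(\<sigma>, s) \<in> W. \<forall>i < r. sp_act r \<sigma> s x i = y i)"

definition conj_star :: "((nat \<Rightarrow> nat) \<times> (nat \<Rightarrow> bool)) set \<Rightarrow> int \<Rightarrow> nat \<Rightarrow> (nat \<Rightarrow> real) \<Rightarrow> (nat \<Rightarrow> real) \<Rightarrow> bool" where
  "conj_star W \<delta> r x y \<longleftrightarrow> (\<exists>(\<sigma>, s) \<in> W. \<forall>i < r. star_act \<delta> r \<sigma> s x i = y i)"

definition vmeet :: "(nat \<Rightarrow> real) \<Rightarrow> (nat \<Rightarrow> real) \<Rightarrow> (nat \<Rightarrow> real)" where
  "vmeet x y = (\<lambda>i. min (x i) (y i))"

definition decr :: "nat \<Rightarrow> (nat \<Rightarrow> real) \<Rightarrow> bool" where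
  "decr r x \<longleftrightarrow> (\<forall>i j. i < j \<longrightarrow> j < r \<longrightarrow> x j \<le> x i)"

definition strict_decr :: "nat \<Rightarrow> (nat \<Rightarrow> real) \<Rightarrow> bool" where
  "strict_decr r x \<longleftrightarrow> (\<forall>i j. i < j \<longrightarrow> j < r \<longrightarrow> x j < x i)"

end

theory Submission
  imports Defs "HOL-Library.Multiset"
begin

text \<open>A signed permutation moves absolute values around, so two vectors are W(C_r)-conjugate
  iff their multisets of absolute values agree; W(D_r)-conjugacy additionally asks for equal
  products of signs. For decreasing x, y and a threshold t > 0 the index sets where
  t \<le> x_i resp. x_i \<le> -t are initial resp. final segments, hence nested for x and y. Passing to
  the coordinatewise minimum intersects the first pair and unites the second, so the number of
  coordinates with t \<le> |x_i| does not change; the same nesting of the sets of negative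
  coordinates preserves the product of signs. The star action is the linear action conjugated by
  the shift by rho_hat, which keeps vectors decreasing and commutes with the minimum.\<close>

definition abs_list :: "nat \<Rightarrow> (nat \<Rightarrow> real) \<Rightarrow> real list" where
  "abs_list r x = map (\<lambda>i. \<bar>x i\<bar>) [0..<r]"

lemma size_filter_mset_abs_list:
  "size (filter_mset Q (mset (abs_list r w))) = card {i. i < r \<and> Q \<bar>w i\<bar>}"
proof -
  have "size (filter_mset Q (mset (abs_list r w))) = length (filter Q (abs_list r w))"
    by (metis mset_filter size_mset)
  also have "\<dots> = card {i. i < r \<and> Q \<bar>w i\<bar>}"
    unfolding length_filter_conv_card abs_list_def by (rule arg_cong[where f = card]) auto
  finally show ?thesis .
qed

lemma count_mset_abs_list:
  "count (mset (abs_list r w)) v = card {i. i < r \<and> \<bar>w i\<bar> = v}"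
  using size_filter_mset_abs_list[of "\<lambda>u. u = v" r w] by (simp add: filter_eq_replicate_mset)

lemma zero_in_abs_list_iff: "0 \<in> set (abs_list r w) \<longleftrightarrow> (\<exists>j<r. w j = 0)"
  by (auto simp: abs_list_def)

lemma permute_list_map_upt:
  assumes "\<sigma> permutes {..<r}"
  shows "permute_list \<sigma> (map f [0..<r]) = map (f \<circ> \<sigma>) [0..<r]"
  using permutes_in_image[OF assms] by (simp add: permute_list_def)

lemma abs_sp_act: "i < r \<Longrightarrow> \<bar>sp_act r \<sigma> s x i\<bar> = \<bar>x (\<sigma> i)\<bar>"
  by (simp add: sp_act_def)

lemma conj_lin_W_C_iff_mset_abs_list:
  "conj_lin (W_C r) r x y \<longleftrightarrow> mset (abs_list r x) = mset (abs_list r y)"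
proof
  assume "conj_lin (W_C r) r x y"
  then obtain \<sigma> s where \<sigma>: "\<sigma> permutes {..<r}" and act: "\<forall>i<r. sp_act r \<sigma> s x i = y i"
    by (auto simp: conj_lin_def W_C_def)
  have "\<bar>y i\<bar> = \<bar>x (\<sigma> i)\<bar>" if "i < r" for i
    using act that abs_sp_act by metis
  then have "abs_list r y = map ((\<lambda>i. \<bar>x i\<bar>) \<circ> \<sigma>) [0..<r]"
    by (simp add: abs_list_def)
  also have "\<dots> = permute_list \<sigma> (abs_list r x)"
    unfolding abs_list_def by (rule permute_list_map_upt[OF \<sigma>, symmetric])
  finally show "mset (abs_list r x) = mset (abs_list r y)"
    using \<sigma> by (simp add: abs_list_def)
next
  assume "mset (abs_list r x) = mset (abs_list r y)"
  then obtain \<sigma> where \<sigma>: "\<sigma> permutes {..<r}"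
    and "permute_list \<sigma> (abs_list r x) = abs_list r y"
    by (metis mset_eq_permutation length_map length_upt diff_zero abs_list_def)
  then have abs_eq: "\<bar>x (\<sigma> i)\<bar> = \<bar>y i\<bar>" if "i < r" for i
    using that by (simp add: abs_list_def permute_list_map_upt)
  let ?s = "\<lambda>i. i < r \<and> x (\<sigma> i) \<noteq> y i"
  have "(\<sigma>, ?s) \<in> W_C r"
    using \<sigma> by (simp add: W_C_def)
  moreover have "\<forall>i<r. sp_act r \<sigma> ?s x i = y i"
    using abs_eq by (auto simp: sp_act_def abs_eq_iff) force
  ultimately show "conj_lin (W_C r) r x y"
    unfolding conj_lin_def by blast
qed

lemma decr_superlevel_sets_nested:
  assumes x: "decr r x" and y: "decr r y" and up: "\<And>a b. P a \<Longrightarrow> a \<le> b \<Longrightarrow> P b"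
  shows "{i. i < r \<and> P (x i)} \<subseteq> {i. i < r \<and> P (y i)}
       \<or> {i. i < r \<and> P (y i)} \<subseteq> {i. i < r \<and> P (x i)}"
proof (rule ccontr)
  assume "\<not> ?thesis"
  then obtain a b where a: "a < r" "P (x a)" "\<not> P (y a)" and b: "b < r" "P (y b)" "\<not> P (x b)"
    by blast
  consider "a < b" | "b < a" | "a = b" by linarith
  then show False
  proof cases
    case 1
    then show False using y b a up unfolding decr_def by blast
  next
    case 2
    then show False using x a b up unfolding decr_def by blast
  qed (use a b in simp)
qed

lemma decr_sublevel_sets_nested:
  assumes "decr r x" "decr r y" and down: "\<And>a b. P a \<Longrightarrow> b \<le> a \<Longrightarrow> P b"
  shows "{i. i < r \<and> P (x i)} \<subseteq> {i. i < r \<and> P (y i)}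
       \<or> {i. i < r \<and> P (y i)} \<subseteq> {i. i < r \<and> P (x i)}"
  using decr_superlevel_sets_nested[OF assms(1,2), of "\<lambda>u. \<not> P u"] down by blast

lemma card_Int_Un_of_nested:
  assumes "finite A" "finite B" "finite C" "finite D"
    and AB: "A \<subseteq> B \<or> B \<subseteq> A" and CD: "C \<subseteq> D \<or> D \<subseteq> C"
    and eq: "card A + card C = card B + card D"
  shows "card (A \<inter> B) + card (C \<union> D) = card A + card C"
  using AB CD
proof (elim disjE)
  assume "A \<subseteq> B" "C \<subseteq> D"
  moreover from this have "card A \<le> card B" "card C \<le> card D"
    using assms(2,4) by (simp_all add: card_mono)
  ultimately show ?thesis
    using eq by (simp add: Int_absorb2 Un_absorb1)
next
  assume "B \<subseteq> A" "D \<subseteq> C"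
  moreover from this have "card B \<le> card A" "card D \<le> card C"
    using assms(1,3) by (simp_all add: card_mono)
  ultimately show ?thesis
    using eq by (simp add: Int_absorb1 Un_absorb2)
qed (use eq in \<open>simp_all add: Int_absorb1 Int_absorb2 Un_absorb1 Un_absorb2\<close>)

lemma card_abs_level_split:
  fixes P :: "real \<Rightarrow> bool" and w :: "nat \<Rightarrow> real"
  assumes pos: "\<And>u. P u \<Longrightarrow> 0 < u"
  shows "card {i. i < r \<and> P \<bar>w i\<bar>} = card {i. i < r \<and> P (w i)} + card {i. i < r \<and> P (- w i)}"
proof -
  have "\<not> (P u \<and> P (- u))" for u
    using pos[of u] pos[of "- u"] by linarith
  then have "{i. i < r \<and> P (w i)} \<inter> {i. i < r \<and> P (- w i)} = {}"
    by blast
  moreover have "{i. i < r \<and> P \<bar>w i\<bar>} = {i. i < r \<and> P (w i)} \<union> {i. i < r \<and> P (- w i)}"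
    by (auto simp: abs_if dest: pos)
  ultimately show ?thesis
    by (simp add: card_Un_disjoint)
qed

lemma card_abs_superlevel_min:
  fixes P :: "real \<Rightarrow> bool"
  assumes x: "decr r x" and y: "decr r y" and up: "\<And>a b. P a \<Longrightarrow> a \<le> b \<Longrightarrow> P b"
    and eq: "card {i. i < r \<and> P \<bar>x i\<bar>} = card {i. i < r \<and> P \<bar>y i\<bar>}"
  shows "card {i. i < r \<and> P \<bar>min (x i) (y i)\<bar>} = card {i. i < r \<and> P \<bar>x i\<bar>}"
proof (cases "P 0")
  case True
  have "P \<bar>u\<bar>" for u
    using up[OF True, of "\<bar>u\<bar>"] by simp
  then show ?thesis
    by simp
next
  case False
  then have pos: "P u \<Longrightarrow> 0 < u" for u
    using up[of u 0] by force
  have down: "P (- a) \<Longrightarrow> b \<le> a \<Longrightarrow> P (- b)" for a b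
    using up[of "- a" "- b"] by simp
  note split = card_abs_level_split[where P = P, OF pos]
  have "P (min a b) \<longleftrightarrow> P a \<and> P b" "P (- min a b) \<longleftrightarrow> P (- a) \<or> P (- b)" for a b
    using up[of "min a b" a] up[of "min a b" b] down[of a b] down[of b a] by (auto simp: min_def)
  then have "{i. i < r \<and> P (min (x i) (y i))} = {i. i < r \<and> P (x i)} \<inter> {i. i < r \<and> P (y i)}"
    and "{i. i < r \<and> P (- min (x i) (y i))} = {i. i < r \<and> P (- x i)} \<union> {i. i < r \<and> P (- y i)}"
    by auto
  moreover have "card {i. i < r \<and> P (x i)} + card {i. i < r \<and> P (- x i)}
               = card {i. i < r \<and> P (y i)} + card {i. i < r \<and> P (- y i)}"
    using eq by (simp add: split)
  moreover have "{i. i < r \<and> P (x i)} \<subseteq> {i. i < r \<and> P (y i)}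
               \<or> {i. i < r \<and> P (y i)} \<subseteq> {i. i < r \<and> P (x i)}"
    by (rule decr_superlevel_sets_nested[OF x y up])
  moreover have "{i. i < r \<and> P (- x i)} \<subseteq> {i. i < r \<and> P (- y i)}
               \<or> {i. i < r \<and> P (- y i)} \<subseteq> {i. i < r \<and> P (- x i)}"
    using decr_sublevel_sets_nested[OF x y, of "\<lambda>u. P (- u)"] down by blast
  ultimately show ?thesis
    using card_Int_Un_of_nested[of "{i. i < r \<and> P (x i)}" "{i. i < r \<and> P (y i)}"
        "{i. i < r \<and> P (- x i)}" "{i. i < r \<and> P (- y i)}"]
    by (simp add: split)
qed

lemma mset_abs_list_vmeet:
  assumes x: "decr r x" and y: "decr r y" and eq: "mset (abs_list r x) = mset (abs_list r y)"
  shows "mset (abs_list r (vmeet x y)) = mset (abs_list r x)"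
proof (rule multiset_eqI)
  fix v :: real
  have eq_level: "card {i. i < r \<and> P \<bar>x i\<bar>} = card {i. i < r \<and> P \<bar>y i\<bar>}" for P
    using size_filter_mset_abs_list[of P r x] size_filter_mset_abs_list[of P r y] eq by simp
  have level: "card {i. i < r \<and> P \<bar>vmeet x y i\<bar>} = card {i. i < r \<and> P \<bar>x i\<bar>}"
    if "\<And>a b. P a \<Longrightarrow> a \<le> b \<Longrightarrow> P b" for P :: "real \<Rightarrow> bool"
    unfolding vmeet_def by (rule card_abs_superlevel_min[where P = P, OF x y that eq_level])
  have "{i. i < r \<and> \<bar>w i\<bar> = v} = {i. i < r \<and> v \<le> \<bar>w i\<bar>} - {i. i < r \<and> v < \<bar>w i\<bar>}"
    for w :: "nat \<Rightarrow> real"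
    by auto
  then have "count (mset (abs_list r w)) v
           = card {i. i < r \<and> v \<le> \<bar>w i\<bar>} - card {i. i < r \<and> v < \<bar>w i\<bar>}" for w
    by (simp add: count_mset_abs_list card_Diff_subset subset_iff)
  then show "count (mset (abs_list r (vmeet x y))) v = count (mset (abs_list r x)) v"
    using level[of "\<lambda>u. v \<le> u"] level[of "\<lambda>u. v < u"] by simp
qed

lemma conj_lin_W_C_vmeet:
  assumes "decr r x" "decr r y" "conj_lin (W_C r) r x y"
  shows "conj_lin (W_C r) r x (vmeet x y)"
  using assms mset_abs_list_vmeet by (simp add: conj_lin_W_C_iff_mset_abs_list)

lemma prod_neg_one_if:
  "finite A \<Longrightarrow> (\<Prod>i\<in>A. if P i then - 1 else 1 :: 'a :: comm_ring_1) = (- 1) ^ card {i\<in>A. P i}"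
  by (simp add: prod.If_cases Int_def)

lemma prod_sgn_sp_act:
  assumes "(\<sigma>, s) \<in> W_C r"
  shows "(\<Prod>i<r. sgn (sp_act r \<sigma> s x i)) = (- 1) ^ card {i. i < r \<and> s i} * (\<Prod>i<r. sgn (x i))"
proof -
  have \<sigma>: "\<sigma> permutes {..<r}"
    using assms by (simp add: W_C_def)
  have "(\<Prod>i<r. sgn (sp_act r \<sigma> s x i)) = (\<Prod>i<r. (if s i then - 1 else 1) * sgn (x (\<sigma> i)))"
    by (rule prod.cong) (simp_all add: sp_act_def sgn_minus)
  also have "\<dots> = (\<Prod>i<r. if s i then - 1 else 1) * (\<Prod>i<r. sgn (x (\<sigma> i)))"
    by (rule prod.distrib)
  also have "(\<Prod>i<r. sgn (x (\<sigma> i))) = (\<Prod>i<r. sgn (x i))"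
    using prod.permute[OF \<sigma>, of "\<lambda>i. sgn (x i)"] by (simp add: comp_def)
  also have "(\<Prod>i<r. if s i then - 1 else 1 :: real) = (- 1) ^ card {i. i < r \<and> s i}"
    by (simp add: prod_neg_one_if)
  finally show ?thesis .
qed

lemma prod_sgn_eq_neg_one_power:
  fixes x :: "nat \<Rightarrow> real"
  assumes "\<forall>i<r. x i \<noteq> 0"
  shows "(\<Prod>i<r. sgn (x i)) = (- 1) ^ card {i. i < r \<and> x i < 0}"
proof -
  have "(\<Prod>i<r. sgn (x i)) = (\<Prod>i<r. if x i < 0 then - 1 else 1 :: real)"
    using assms by (intro prod.cong) (auto simp: sgn_if)
  then show ?thesis
    by (simp add: prod_neg_one_if)
qed

lemma prod_sgn_eq_0_iff:
  fixes x :: "nat \<Rightarrow> real"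
  shows "(\<Prod>i<r. sgn (x i)) = 0 \<longleftrightarrow> (\<exists>j<r. x j = 0)"
  by (auto simp: sgn_eq_0_iff)

lemma sp_act_update_at_zero:
  assumes "x (\<sigma> k) = 0"
  shows "sp_act r \<sigma> (s(k := b)) x = sp_act r \<sigma> s x"
  using assms by (auto simp: sp_act_def fun_eq_iff)

lemma even_card_flip_iff:
  fixes s :: "nat \<Rightarrow> bool"
  assumes "k < r"
  shows "even (card {i. i < r \<and> (s(k := \<not> s k)) i}) \<longleftrightarrow> odd (card {i. i < r \<and> s i})"
proof (cases "s k")
  case True
  then have "{i. i < r \<and> (s(k := \<not> s k)) i} = {i. i < r \<and> s i} - {k}"
    by auto
  moreover have "Suc (card ({i. i < r \<and> s i} - {k})) = card {i. i < r \<and> s i}"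
    using True assms by (intro card_Suc_Diff1) auto
  ultimately show ?thesis
    by (metis even_Suc)
next
  case False
  then have "{i. i < r \<and> (s(k := \<not> s k)) i} = insert k {i. i < r \<and> s i}"
    using assms by auto
  then show ?thesis
    using False by simp
qed

lemma conj_lin_W_D_iff:
  "conj_lin (W_D r) r x y \<longleftrightarrow>
     conj_lin (W_C r) r x y \<and> (\<Prod>i<r. sgn (x i)) = (\<Prod>i<r. sgn (y i))"
proof
  assume "conj_lin (W_D r) r x y"
  then obtain \<sigma> s where ws: "(\<sigma>, s) \<in> W_C r" and even: "even (card {i. i < r \<and> s i})"
    and act: "\<forall>i<r. sp_act r \<sigma> s x i = y i"
    by (auto simp: conj_lin_def W_D_def)
  have "(\<Prod>i<r. sgn (y i)) = (\<Prod>i<r. sgn (sp_act r \<sigma> s x i))"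
    using act by simp
  also have "\<dots> = (\<Prod>i<r. sgn (x i))"
    using prod_sgn_sp_act[OF ws] even by simp
  finally show "conj_lin (W_C r) r x y \<and> (\<Prod>i<r. sgn (x i)) = (\<Prod>i<r. sgn (y i))"
    using ws act unfolding conj_lin_def by auto
next
  assume "conj_lin (W_C r) r x y \<and> (\<Prod>i<r. sgn (x i)) = (\<Prod>i<r. sgn (y i))"
  then obtain \<sigma> s where ws: "(\<sigma>, s) \<in> W_C r" and act: "\<forall>i<r. sp_act r \<sigma> s x i = y i"
    and prod_eq: "(\<Prod>i<r. sgn (x i)) = (\<Prod>i<r. sgn (y i))"
    by (auto simp: conj_lin_def)
  have \<sigma>: "\<sigma> permutes {..<r}"
    using ws by (simp add: W_C_def)
  show "conj_lin (W_D r) r x y"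
  proof (cases "even (card {i. i < r \<and> s i})")
    case True
    then show ?thesis
      using ws act by (auto simp: conj_lin_def W_D_def)
  next
    case odd: False
    \<comment> \<open>an odd number of sign changes preserves the product of signs only if it vanishes; then
      an extra sign change at a zero coordinate restores even parity\<close>
    have "(\<Prod>i<r. sgn (y i)) = - (\<Prod>i<r. sgn (x i))"
      using prod_sgn_sp_act[OF ws, of x] act odd by simp
    with prod_eq have "(\<Prod>i<r. sgn (x i)) = 0"
      by linarith
    then obtain j where j: "j < r" "x j = 0"
      by (auto simp: prod_sgn_eq_0_iff)
    define k where "k = inv \<sigma> j"
    have k: "k < r" "\<sigma> k = j"
      using permutes_in_image[OF permutes_inv[OF \<sigma>]] permutes_inverses(1)[OF \<sigma>] j
      by (auto simp: k_def)
    have "(\<sigma>, s(k := \<not> s k)) \<in> W_C r"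
      using ws k by (auto simp: W_C_def)
    moreover have "even (card {i. i < r \<and> (s(k := \<not> s k)) i})"
      using even_card_flip_iff[OF k(1)] odd by simp
    moreover have "\<forall>i<r. sp_act r \<sigma> (s(k := \<not> s k)) x i = y i"
      using sp_act_update_at_zero[of x \<sigma> k] j k act by simp
    ultimately show ?thesis
      unfolding conj_lin_def W_D_def by blast
  qed
qed

lemma conj_lin_W_D_vmeet:
  assumes x: "decr r x" and y: "decr r y" and xy: "conj_lin (W_D r) r x y"
  shows "conj_lin (W_D r) r x (vmeet x y)"
proof -
  let ?z = "vmeet x y"
  have eq: "mset (abs_list r x) = mset (abs_list r y)"
    and prod_eq: "(\<Prod>i<r. sgn (x i)) = (\<Prod>i<r. sgn (y i))"
    using xy by (simp_all add: conj_lin_W_D_iff conj_lin_W_C_iff_mset_abs_list)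
  have eq_z: "mset (abs_list r ?z) = mset (abs_list r x)"
    by (rule mset_abs_list_vmeet[OF x y eq])
  have "(\<Prod>i<r. sgn (?z i)) = (\<Prod>i<r. sgn (x i))"
  proof (cases "\<exists>j<r. x j = 0")
    case True
    moreover from this have "\<exists>j<r. ?z j = 0"
      using eq_z by (metis zero_in_abs_list_iff set_mset_mset)
    ultimately show ?thesis
      by (metis prod_sgn_eq_0_iff)
  next
    case False
    then have nz_x: "\<forall>j<r. x j \<noteq> 0" and nz_y: "\<forall>j<r. y j \<noteq> 0"
      using eq by (metis zero_in_abs_list_iff set_mset_mset)+
    then have nz_z: "\<forall>j<r. ?z j \<noteq> 0"
      by (simp add: vmeet_def min_def)
    have "{i. i < r \<and> ?z i < 0} = {i. i < r \<and> x i < 0} \<union> {i. i < r \<and> y i < 0}"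
      by (auto simp: vmeet_def)
    moreover have "{i. i < r \<and> x i < 0} \<subseteq> {i. i < r \<and> y i < 0}
                 \<or> {i. i < r \<and> y i < 0} \<subseteq> {i. i < r \<and> x i < 0}"
      by (rule decr_sublevel_sets_nested[OF x y]) simp
    ultimately have "card {i. i < r \<and> ?z i < 0} = card {i. i < r \<and> x i < 0}
                   \<or> card {i. i < r \<and> ?z i < 0} = card {i. i < r \<and> y i < 0}"
      by (auto simp: Un_absorb1 Un_absorb2)
    then show ?thesis
      using prod_eq prod_sgn_eq_neg_one_power[OF nz_x] prod_sgn_eq_neg_one_power[OF nz_y]
        prod_sgn_eq_neg_one_power[OF nz_z]
      by auto
  qed
  then show ?thesis
    using eq_z by (simp add: conj_lin_W_D_iff conj_lin_W_C_iff_mset_abs_list)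
qed

definition rho_shift :: "int \<Rightarrow> (nat \<Rightarrow> real) \<Rightarrow> nat \<Rightarrow> real" where
  "rho_shift \<delta> x = (\<lambda>i. x i + rho_hat \<delta> i)"

lemma conj_star_iff_conj_lin_rho_shift:
  "conj_star W \<delta> r x y \<longleftrightarrow> conj_lin W r (rho_shift \<delta> x) (rho_shift \<delta> y)"
proof -
  have "star_act \<delta> r \<sigma> s x i = y i \<longleftrightarrow> sp_act r \<sigma> s (rho_shift \<delta> x) i = rho_shift \<delta> y i"
    for \<sigma> s i
    by (auto simp: star_act_def rho_shift_def)
  then show ?thesis
    by (simp add: conj_star_def conj_lin_def)
qed

lemma decr_rho_shift: "decr r x \<Longrightarrow> decr r (rho_shift \<delta> x)"
  by (force simp: decr_def rho_shift_def rho_hat_def)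

lemma vmeet_rho_shift: "vmeet (rho_shift \<delta> x) (rho_shift \<delta> y) = rho_shift \<delta> (vmeet x y)"
  by (auto simp: vmeet_def rho_shift_def min_def)

lemma conj_star_vmeet:
  assumes lin: "\<And>x y. decr r x \<Longrightarrow> decr r y \<Longrightarrow> conj_lin W r x y \<Longrightarrow> conj_lin W r x (vmeet x y)"
    and "decr r x" "decr r y" "conj_star W \<delta> r x y"
  shows "conj_star W \<delta> r x (vmeet x y)"
  using lin[of "rho_shift \<delta> x" "rho_shift \<delta> y"] assms(2-4)
  by (simp add: conj_star_iff_conj_lin_rho_shift decr_rho_shift vmeet_rho_shift)

lemma strict_decr_imp_decr: "strict_decr r x \<Longrightarrow> decr r x"
  by (simp add: strict_decr_def decr_def less_imp_le)

theorem proposition3p2: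
  fixes r :: nat and \<delta> :: int and lam mu :: "nat \<Rightarrow> real"
  assumes "r \<ge> 1"
  shows "(strict_decr r lam \<and> strict_decr r mu \<and> conj_lin (W_C r) r lam mu
            \<longrightarrow> conj_lin (W_C r) r lam (vmeet lam mu))
       \<and> (decr r lam \<and> decr r mu \<and> conj_star (W_C r) \<delta> r lam mu
            \<longrightarrow> conj_star (W_C r) \<delta> r lam (vmeet lam mu))
       \<and> (strict_decr r lam \<and> strict_decr r mu \<and> conj_lin (W_D r) r lam mu
            \<longrightarrow> conj_lin (W_D r) r lam (vmeet lam mu))
       \<and> (decr r lam \<and> decr r mu \<and> conj_star (W_D r) \<delta> r lam mu
            \<longrightarrow> conj_star (W_D r) \<delta> r lam (vmeet lam mu))"
  using conj_lin_W_C_vmeet conj_lin_W_D_vmeet strict_decr_imp_decr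
    conj_star_vmeet[OF conj_lin_W_C_vmeet] conj_star_vmeet[OF conj_lin_W_D_vmeet]
  by blast

end
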